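(* Let $(\bm n;\bm m)\in\mathfrak C_{2r}$ with $\bm n\neq-\bm m$. Then each of the following four statements is equivalent to $\det T_{\bm n;\bm m}\neq 0$: (i) there exists a unique Laurent polynomial $\Phi(z)=z^{|\bm n|}+\dots+\alpha z^{-|\bm m|}$ (i.e. $\Phi\in\operatorname{span}\{z^k\}_{k=-|\bm m|}^{|\bm n|}$ with $z^{|\bm n|}$-coefficient $1$) such that $L_j[\Phi(w)w^{-k}]=0$ for all $-m_j\le k\le n_j-1$ and $1\le j\le r$; (ii) there exists a unique Laurent polynomial $\Phi^*(z)=\beta z^{|\bm n|}+\dots+z^{-|\bm m|}$ (i.e. $\Phi^*\in\operatorname{span}\{z^k\}_{k=-|\bm m|}^{|\bm n|}$ with $z^{-|\bm m|}$-coefficient $1$) such that $L_j[\Phi^*(w)w^{-k}]=0$ for all $-m_j+1\le k\le n_j$ and $1\le j\le r$; (iii) there exists a unique vector $(\Xi_1,\dots,\Xi_r)$ of Laurent polynomials with $\Xi_j\in\operatorname{span}\{z^k\}_{k=-n_j}^{m_j-1}$ such that $\sum_{j=1}^r L_j[\Xi_j(w)w^{-k}]=0$ for $-|\bm n|+1\le k\le |\bm m|-1$ and $\sum_{j=1}^r L_j[\Xi_j(w)w^{|\bm n|}]=1$; (iv) there exists a unique vector $(\Xi^*_1,\dots,\Xi^*_r)$ of Laurent polynomials with $\Xi^*_j\in\operatorname{span}\{z^k\}_{k=-n_j+1}^{m_j}$ such that $\sum_{j=1}^r L_j[\Xi^*_j(w)w^{-k}]=0$ for $-|\bm n|+1\le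 k\le |\bm m|-1$ and $\sum_{j=1}^r L_j[\Xi^*_j(w)w^{-|\bm m|}]=1$.
   Context: Fix $r\ge1$. For $\bm v=(v_1,\dots,v_r)\in\mathbb Z^r$, $|\bm v|:=v_1+\dots+v_r$ (signed sum, no absolute values). Let $c_{k,j}\in\mathbb C$ ($k\in\mathbb Z$, $j=1,\dots,r$) be arbitrary complex numbers and let $L_j$ be the linear functional on the space of complex Laurent polynomials in $w$ determined by $L_j[w^{-k}]=c_{k,j}$ for all $k\in\mathbb Z$. Let $\mathfrak C_{2r}=\{(\bm n;\bm m)\in\mathbb Z^r\times\mathbb Z^r: n_j+m_j\ge 0 \text{ for all } j\}$. For $(\bm n;\bm m)\in\mathfrak C_{2r}$ with $\bm n\ne-\bm m$, $T_{\bm n;\bm m}$ denotes the $(|\bm n|+|\bm m|)\times(|\bm n|+|\bm m|)$ matrix whose rows are indexed by the pairs $(j,k)$ with $1\le j\le r$, $-m_j\le k\le n_j-1$ (ordered first by $j$, then by increasing $k$; a block is empty if $n_j=-m_j$), whose columns are indexed by $i=-|\bm m|,\dots,|\bm n|-1$ in increasing order, and whose $((j,k),i)$ entry is $c_{k-i,j}$. *)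

theory Defs
  imports Complex_Main "Jordan_Normal_Form.Determinant"
begin

definition vsum :: "nat \<Rightarrow> (nat \<Rightarrow> int) \<Rightarrow> int" where
  "vsum r v = (\<Sum>j=1..r. v j)"

(* Laurent polynomials in w are represented by their coefficient functions
   P :: int \<Rightarrow> complex  (P i = coefficient of w^i). *)
definition lp_span :: "int \<Rightarrow> int \<Rightarrow> (int \<Rightarrow> complex) set" where
  "lp_span a b = {P. \<forall>i. P i \<noteq> 0 \<longrightarrow> a \<le> i \<and> i \<le> b}"

definition mono_mult :: "(int \<Rightarrow> complex) \<Rightarrow> int \<Rightarrow> (int \<Rightarrow> complex)" where
  "mono_mult P e = (\<lambda>i. P (i - e))"

(* L_j, the linear functional with L_j[w^{-k}] = c k j, applied to a Laurent polynomial *)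
definition Lfun :: "(int \<Rightarrow> nat \<Rightarrow> complex) \<Rightarrow> nat \<Rightarrow> (int \<Rightarrow> complex) \<Rightarrow> complex" where
  "Lfun c j P = (\<Sum>i\<in>{i. P i \<noteq> 0}. P i * c (- i) j)"

definition row_offset :: "(nat \<Rightarrow> int) \<Rightarrow> (nat \<Rightarrow> int) \<Rightarrow> nat \<Rightarrow> int" where
  "row_offset n m j = (\<Sum>l=1..<j. n l + m l)"

(* the pair (j,k) labelling the p-th row (0-based), rows ordered by j, then increasing k *)
definition row_label :: "nat \<Rightarrow> (nat \<Rightarrow> int) \<Rightarrow> (nat \<Rightarrow> int) \<Rightarrow> nat \<Rightarrow> nat \<times> int" where
  "row_label r n m p = (THE (j,k). 1 \<le> j \<and> j \<le> r \<and> - m j \<le> k \<and> k \<le> n j - 1 \<and>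
                        row_offset n m j + (k + m j) = int p)"

(* T_{n;m}: row p <-> (j,k), column q <-> i = q - |m|, entry c_{k-i,j} *)
definition Tmat :: "nat \<Rightarrow> (int \<Rightarrow> nat \<Rightarrow> complex) \<Rightarrow> (nat \<Rightarrow> int) \<Rightarrow> (nat \<Rightarrow> int) \<Rightarrow> complex mat" where
  "Tmat r c n m = (let N = nat (vsum r n + vsum r m) in
     mat N N (\<lambda>(p,q). case row_label r n m p of (j,k) \<Rightarrow> c (k - (int q - vsum r m)) j))"

end

theory Submission
  imports Defs
begin

(* T_{n;m} is the coefficient matrix of each of the four problems. In (i) and (ii) the unknowns
   are the coefficients of Phi other than the normalised one, and the conditions L_j[Phi w^-k] = 0
   are the rows of T x = b, with b minus the column of the normalised coefficient (for (ii) after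
   shifting k and the exponents by one). In (iii) and (iv) the unknowns are the coefficients of
   the Xi_j, which are indexed like the rows of T, while the conditions are indexed like its
   columns; so the system is T^t y = e_p, the normalised condition picking e_p. A square system
   has exactly one solution iff its determinant is nonzero, and det T^t = det T. *)

lemma ex1_bij_betw_iff:
  assumes bij: "bij_betw f S T" and PQ: "\<And>x. x \<in> S \<Longrightarrow> P x \<longleftrightarrow> Q (f x)"
  shows "(\<exists>!x. x \<in> S \<and> P x) \<longleftrightarrow> (\<exists>!y. y \<in> T \<and> Q y)"
proof
  assume "\<exists>!x. x \<in> S \<and> P x"
  then obtain x where x: "x \<in> S" "P x" and u: "\<And>x'. x' \<in> S \<Longrightarrow> P x' \<Longrightarrow> x' = x"
    by blast
  show "\<exists>!y. y \<in> T \<and> Q y"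
  proof (rule ex1I[of _ "f x"])
    show "f x \<in> T \<and> Q (f x)" using x bij PQ by (auto simp: bij_betw_def)
  next
    fix y assume y: "y \<in> T \<and> Q y"
    then obtain x' where "x' \<in> S" "y = f x'" using bij by (auto simp: bij_betw_def)
    then show "y = f x" using u y PQ by blast
  qed
next
  assume "\<exists>!y. y \<in> T \<and> Q y"
  then obtain y where y: "y \<in> T" "Q y" and u: "\<And>y'. y' \<in> T \<Longrightarrow> Q y' \<Longrightarrow> y' = y"
    by blast
  obtain x where x: "x \<in> S" "y = f x" using y bij by (auto simp: bij_betw_def)
  show "\<exists>!x. x \<in> S \<and> P x"
  proof (rule ex1I[of _ x])
    show "x \<in> S \<and> P x" using x y PQ by simp
  next
    fix x' assume x': "x' \<in> S \<and> P x'"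
    then have "f x' = f x" using u x bij PQ by (auto simp: bij_betw_def)
    then show "x' = x" using x' x bij by (auto simp: bij_betw_def dest: inj_onD)
  qed
qed

lemma det_ne_0_iff_ex1_mult_vec:
  fixes A :: "'a::field mat"
  assumes A: "A \<in> carrier_mat N N" and b: "b \<in> carrier_vec N"
  shows "det A \<noteq> 0 \<longleftrightarrow> (\<exists>!x. x \<in> carrier_vec N \<and> A *\<^sub>v x = b)"
proof
  assume d: "det A \<noteq> 0"
  define B where "B = (1 / det A) \<cdot>\<^sub>m adj_mat A"
  have B: "B \<in> carrier_mat N N" using adj_mat(1)[OF A] by (simp add: B_def)
  have scale: "(1 / det A) \<cdot>\<^sub>m (det A \<cdot>\<^sub>m 1\<^sub>m N) = 1\<^sub>m N"
    using d by (intro eq_matI) auto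
  have AB: "A * B = 1\<^sub>m N"
    using adj_mat[OF A] A scale unfolding B_def by (simp add: mult_smult_distrib)
  have BA: "B * A = 1\<^sub>m N"
    using adj_mat[OF A] A scale unfolding B_def by (simp add: mult_smult_assoc_mat)
  show "\<exists>!x. x \<in> carrier_vec N \<and> A *\<^sub>v x = b"
  proof (rule ex1I[of _ "B *\<^sub>v b"])
    show "B *\<^sub>v b \<in> carrier_vec N \<and> A *\<^sub>v (B *\<^sub>v b) = b"
      using A B b AB by (simp add: assoc_mult_mat_vec[symmetric])
  next
    fix x assume x: "x \<in> carrier_vec N \<and> A *\<^sub>v x = b"
    then have "x = (B * A) *\<^sub>v x" using BA by simp
    then show "x = B *\<^sub>v b" using A B x by (simp add: assoc_mult_mat_vec)
  qed
next
  assume "\<exists>!x. x \<in> carrier_vec N \<and> A *\<^sub>v x = b"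
  then obtain x where x: "x \<in> carrier_vec N" "A *\<^sub>v x = b"
    and uniq: "\<And>y. y \<in> carrier_vec N \<Longrightarrow> A *\<^sub>v y = b \<Longrightarrow> y = x"
    by blast
  show "det A \<noteq> 0"
  proof
    assume "det A = 0"
    then obtain v where v: "v \<in> carrier_vec N" "v \<noteq> 0\<^sub>v N" "A *\<^sub>v v = 0\<^sub>v N"
      using det_0_iff_vec_prod_zero[OF A] by auto
    have "x + v = x"
      using A b x v by (intro uniq) (simp_all add: mult_add_distrib_mat_vec)
    have "v = 0\<^sub>v N"
    proof (rule eq_vecI)
      fix i assume "i < dim_vec (0\<^sub>v N)"
      then have i: "i < N" by simp
      have "(x + v) $ i = x $ i" using \<open>x + v = x\<close> by simp
      then show "v $ i = 0\<^sub>v N $ i" using i x v by simp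
    qed (use v in simp)
    with v show False by simp
  qed
qed

definition vanishes_outside :: "'i set \<Rightarrow> ('i \<Rightarrow> 'a::zero) set" where
  "vanishes_outside C = {x. \<forall>i. i \<notin> C \<longrightarrow> x i = 0}"

lemma bij_betw_vec_vanishes_outside:
  assumes cols: "bij_betw \<gamma> C {..<N}"
  shows "bij_betw (\<lambda>x. vec N (\<lambda>q. x (inv_into C \<gamma> q))) (vanishes_outside C) (carrier_vec N)"
proof -
  have \<gamma>: "\<gamma> i < N" "inv_into C \<gamma> (\<gamma> i) = i" if "i \<in> C" for i
    using cols that by (auto simp: bij_betw_def)
  show ?thesis
  proof (rule bij_betw_byWitness[where f' = "\<lambda>v i. if i \<in> C then v $ \<gamma> i else 0"])
    show "\<forall>x\<in>vanishes_outside C.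
        (\<lambda>i. if i \<in> C then vec N (\<lambda>q. x (inv_into C \<gamma> q)) $ \<gamma> i else 0) = x"
      using \<gamma> by (auto simp: vanishes_outside_def)
    show "\<forall>v\<in>carrier_vec N.
        vec N (\<lambda>q. if inv_into C \<gamma> q \<in> C then v $ \<gamma> (inv_into C \<gamma> q) else 0) = v"
      using cols by (auto simp: bij_betw_def inv_into_into f_inv_into_f intro!: eq_vecI)
  qed (auto simp: vanishes_outside_def)
qed

lemma det_ne_0_iff_ex1_indexed_solution:
  fixes A :: "'a::field mat" and b :: "'r \<Rightarrow> 'a" and \<gamma> :: "'c \<Rightarrow> nat"
  assumes A: "A \<in> carrier_mat N N"
    and rows: "bij_betw \<rho> R {..<N}" and cols: "bij_betw \<gamma> C {..<N}"
  shows "det A \<noteq> 0 \<longleftrightarrow>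
    (\<exists>!x. x \<in> vanishes_outside C \<and> (\<forall>r\<in>R. (\<Sum>i\<in>C. A $$ (\<rho> r, \<gamma> i) * x i) = b r))"
proof -
  define to_vec :: "('c \<Rightarrow> 'a) \<Rightarrow> 'a vec" where "to_vec x = vec N (\<lambda>q. x (inv_into C \<gamma> q))" for x
  define bv where "bv = vec N (\<lambda>p. b (inv_into R \<rho> p))"
  have \<rho>: "\<rho> r < N" "inv_into R \<rho> (\<rho> r) = r" if "r \<in> R" for r
    using rows that by (auto simp: bij_betw_def)
  have \<gamma>: "\<gamma> i < N" "inv_into C \<gamma> (\<gamma> i) = i" if "i \<in> C" for i
    using cols that by (auto simp: bij_betw_def)
  have bij_to_vec: "bij_betw to_vec (vanishes_outside C) (carrier_vec N)"
    unfolding to_vec_def by (rule bij_betw_vec_vanishes_outside[OF cols])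
  have entry: "(A *\<^sub>v to_vec x) $ \<rho> r = (\<Sum>i\<in>C. A $$ (\<rho> r, \<gamma> i) * x i)" if "r \<in> R" for r x
  proof -
    have "(A *\<^sub>v to_vec x) $ \<rho> r = (\<Sum>q<N. A $$ (\<rho> r, q) * to_vec x $ q)"
      using A \<rho> that by (auto simp: scalar_prod_def atLeast0LessThan to_vec_def intro!: sum.cong)
    also have "\<dots> = (\<Sum>i\<in>C. A $$ (\<rho> r, \<gamma> i) * to_vec x $ \<gamma> i)"
      by (rule sum.reindex_bij_betw[OF cols, symmetric])
    also have "\<dots> = (\<Sum>i\<in>C. A $$ (\<rho> r, \<gamma> i) * x i)"
      using \<gamma> by (simp add: to_vec_def)
    finally show ?thesis .
  qed
  have system: "A *\<^sub>v to_vec x = bv \<longleftrightarrow> (\<forall>r\<in>R. (\<Sum>i\<in>C. A $$ (\<rho> r, \<gamma> i) * x i) = b r)" for x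
  proof -
    have "A *\<^sub>v to_vec x = bv \<longleftrightarrow> (\<forall>p\<in>{..<N}. (A *\<^sub>v to_vec x) $ p = bv $ p)"
    proof
      assume "\<forall>p\<in>{..<N}. (A *\<^sub>v to_vec x) $ p = bv $ p"
      then show "A *\<^sub>v to_vec x = bv" using A by (intro eq_vecI) (auto simp: bv_def)
    qed simp
    also have "\<dots> \<longleftrightarrow> (\<forall>r\<in>R. (A *\<^sub>v to_vec x) $ \<rho> r = bv $ \<rho> r)"
      unfolding bij_betw_imp_surj_on[OF rows, symmetric] by blast
    also have "\<dots> \<longleftrightarrow> (\<forall>r\<in>R. (\<Sum>i\<in>C. A $$ (\<rho> r, \<gamma> i) * x i) = b r)"
      using entry \<rho> by (simp add: bv_def)
    finally show ?thesis .
  qed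
  have "det A \<noteq> 0 \<longleftrightarrow> (\<exists>!v. v \<in> carrier_vec N \<and> A *\<^sub>v v = bv)"
    using A by (intro det_ne_0_iff_ex1_mult_vec) (auto simp: bv_def)
  also have "\<dots> \<longleftrightarrow> (\<exists>!x. x \<in> vanishes_outside C \<and> (\<forall>r\<in>R. (\<Sum>i\<in>C. A $$ (\<rho> r, \<gamma> i) * x i) = b r))"
    by (rule ex1_bij_betw_iff[OF bij_to_vec, symmetric]) (simp add: system)
  finally show ?thesis .
qed

lemma det_ne_0_iff_ex1_indexed_solution_transpose:
  fixes A :: "'a::field mat" and b :: "'c \<Rightarrow> 'a"
  assumes A: "A \<in> carrier_mat N N"
    and rows: "bij_betw \<rho> R {..<N}" and cols: "bij_betw \<gamma> C {..<N}"
  shows "det A \<noteq> 0 \<longleftrightarrow>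
    (\<exists>!y. y \<in> vanishes_outside R \<and> (\<forall>i\<in>C. (\<Sum>r\<in>R. A $$ (\<rho> r, \<gamma> i) * y r) = b i))"
proof -
  have "transpose_mat A $$ (\<gamma> i, \<rho> r) = A $$ (\<rho> r, \<gamma> i)" if "i \<in> C" "r \<in> R" for i r
    using A bij_betwE[OF rows] bij_betwE[OF cols] that by simp
  then have "det (transpose_mat A) \<noteq> 0 \<longleftrightarrow> (\<exists>!y. y \<in> vanishes_outside R \<and>
      (\<forall>i\<in>C. (\<Sum>r\<in>R. A $$ (\<rho> r, \<gamma> i) * y r) = b i))"
    using det_ne_0_iff_ex1_indexed_solution[of "transpose_mat A" N \<gamma> C \<rho> R b] A rows cols
    by simp
  then show ?thesis using det_transpose[OF A] by simp
qed

lemma vsum_add_vsum: "vsum r n + vsum r m = (\<Sum>j=1..r. n j + m j)"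
  by (simp add: vsum_def sum.distrib)

lemma vsum_add_vsum_nonneg:
  assumes cone: "\<forall>j\<in>{1..r}. 0 \<le> n j + m j"
  shows "0 \<le> vsum r n + vsum r m"
  unfolding vsum_add_vsum using cone by (intro sum_nonneg) auto

lemma vsum_add_vsum_pos:
  assumes cone: "\<forall>j\<in>{1..r}. 0 \<le> n j + m j" and nontriv: "\<not> (\<forall>j\<in>{1..r}. n j = - m j)"
  shows "0 < vsum r n + vsum r m"
proof -
  obtain j where "j \<in> {1..r}" "n j \<noteq> - m j" using nontriv by blast
  then show ?thesis
    unfolding vsum_add_vsum using cone by (intro sum_pos2[of _ j]) force+
qed

lemma row_offset_Suc: "1 \<le> j \<Longrightarrow> row_offset n m (Suc j) = row_offset n m j + (n j + m j)"
  by (simp add: row_offset_def)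

lemma row_offset_Suc_last: "row_offset n m (Suc r) = vsum r n + vsum r m"
  by (simp add: row_offset_def vsum_add_vsum atLeastLessThanSuc_atLeastAtMost)

lemma row_offset_mono:
  assumes cone: "\<forall>j\<in>{1..r}. 0 \<le> n j + m j" and "1 \<le> j" "j \<le> j'" "j' \<le> Suc r"
  shows "row_offset n m j \<le> row_offset n m j'"
proof -
  have "row_offset n m j' = row_offset n m j + (\<Sum>l=j..<j'. n l + m l)"
    using assms(2,3) by (simp add: row_offset_def sum.atLeastLessThan_concat)
  moreover have "0 \<le> (\<Sum>l=j..<j'. n l + m l)"
    using assms by (intro sum_nonneg) auto
  ultimately show ?thesis by simp
qed

definition Tmat_rows :: "nat \<Rightarrow> (nat \<Rightarrow> int) \<Rightarrow> (nat \<Rightarrow> int) \<Rightarrow> (nat \<times> int) set" where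
  "Tmat_rows r n m = (SIGMA j:{1..r}. {- m j..n j - 1})"

definition row_index :: "(nat \<Rightarrow> int) \<Rightarrow> (nat \<Rightarrow> int) \<Rightarrow> nat \<times> int \<Rightarrow> nat" where
  "row_index n m = (\<lambda>(j, k). nat (row_offset n m j + (k + m j)))"

lemma row_index_in_block:
  assumes cone: "\<forall>j\<in>{1..r}. 0 \<le> n j + m j" and jk: "(j, k) \<in> Tmat_rows r n m"
  shows "int (row_index n m (j, k)) = row_offset n m j + (k + m j)"
    and "int (row_index n m (j, k)) < row_offset n m (Suc j)"
proof -
  have "0 \<le> row_offset n m j"
    using row_offset_mono[OF cone, of 1 j] jk by (simp add: Tmat_rows_def row_offset_def)
  then show "int (row_index n m (j, k)) = row_offset n m j + (k + m j)"
    using jk by (simp add: Tmat_rows_def row_index_def)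
  then show "int (row_index n m (j, k)) < row_offset n m (Suc j)"
    using jk by (simp add: Tmat_rows_def row_offset_Suc)
qed

lemma row_index_less_row_index:
  assumes cone: "\<forall>j\<in>{1..r}. 0 \<le> n j + m j"
    and "(j, k) \<in> Tmat_rows r n m" "(j', k') \<in> Tmat_rows r n m" "j < j'"
  shows "row_index n m (j, k) < row_index n m (j', k')"
proof -
  have "row_offset n m (Suc j) \<le> row_offset n m j'"
    using assms by (intro row_offset_mono[OF cone]) (auto simp: Tmat_rows_def)
  moreover have "0 \<le> k' + m j'" using assms(3) by (simp add: Tmat_rows_def)
  ultimately have "int (row_index n m (j, k)) < int (row_index n m (j', k'))"
    using row_index_in_block[OF cone assms(2)] row_index_in_block(1)[OF cone assms(3)]
    by linarith
  then show ?thesis by simp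
qed

lemma inj_on_row_index:
  assumes cone: "\<forall>j\<in>{1..r}. 0 \<le> n j + m j"
  shows "inj_on (row_index n m) (Tmat_rows r n m)"
proof (rule inj_onI, clarify)
  fix j k j' k'
  assume jk: "(j, k) \<in> Tmat_rows r n m" and jk': "(j', k') \<in> Tmat_rows r n m"
    and eq: "row_index n m (j, k) = row_index n m (j', k')"
  have "j = j'"
  proof (rule linorder_cases)
    assume "j < j'"
    then show ?thesis using row_index_less_row_index[OF cone jk jk'] eq by simp
  next
    assume "j' < j"
    then show ?thesis using row_index_less_row_index[OF cone jk' jk] eq by simp
  qed
  moreover have "row_offset n m j + (k + m j) = row_offset n m j' + (k' + m j')"
    using eq row_index_in_block(1)[OF cone jk] row_index_in_block(1)[OF cone jk'] by linarith
  ultimately show "j = j' \<and> k = k'" by simp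
qed

lemma row_index_less:
  assumes cone: "\<forall>j\<in>{1..r}. 0 \<le> n j + m j" and jk: "(j, k) \<in> Tmat_rows r n m"
  shows "row_index n m (j, k) < nat (vsum r n + vsum r m)"
proof -
  have "row_offset n m (Suc j) \<le> row_offset n m (Suc r)"
    using jk by (intro row_offset_mono[OF cone]) (auto simp: Tmat_rows_def)
  then show ?thesis
    using row_index_in_block(2)[OF cone jk] row_offset_Suc_last[of n m r] by linarith
qed

lemma card_Tmat_rows:
  assumes cone: "\<forall>j\<in>{1..r}. 0 \<le> n j + m j"
  shows "card (Tmat_rows r n m) = nat (vsum r n + vsum r m)"
proof -
  have "int (card (Tmat_rows r n m)) = (\<Sum>j=1..r. int (card {- m j..n j - 1}))"
    by (simp add: Tmat_rows_def)
  also have "\<dots> = vsum r n + vsum r m"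
    using cone by (simp add: vsum_add_vsum)
  finally show ?thesis by linarith
qed

lemma bij_betw_row_index:
  assumes cone: "\<forall>j\<in>{1..r}. 0 \<le> n j + m j"
  shows "bij_betw (row_index n m) (Tmat_rows r n m) {..<nat (vsum r n + vsum r m)}"
proof -
  have "row_index n m ` Tmat_rows r n m \<subseteq> {..<nat (vsum r n + vsum r m)}"
    using row_index_less[OF cone] by auto
  moreover have "card (row_index n m ` Tmat_rows r n m) = card {..<nat (vsum r n + vsum r m)}"
    using card_image[OF inj_on_row_index[OF cone]] card_Tmat_rows[OF cone] by simp
  ultimately show ?thesis
    using inj_on_row_index[OF cone] by (simp add: bij_betw_def card_subset_eq)
qed

lemma row_label_row_index:
  assumes cone: "\<forall>j\<in>{1..r}. 0 \<le> n j + m j" and jk: "(j, k) \<in> Tmat_rows r n m"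
  shows "row_label r n m (row_index n m (j, k)) = (j, k)"
  unfolding row_label_def
proof (rule the_equality)
  show "case (j, k) of (j', k') \<Rightarrow> 1 \<le> j' \<and> j' \<le> r \<and> - m j' \<le> k' \<and> k' \<le> n j' - 1 \<and>
      row_offset n m j' + (k' + m j') = int (row_index n m (j, k))"
    using jk row_index_in_block(1)[OF cone jk] by (simp add: Tmat_rows_def)
next
  fix x assume "case x of (j', k') \<Rightarrow> 1 \<le> j' \<and> j' \<le> r \<and> - m j' \<le> k' \<and> k' \<le> n j' - 1 \<and>
      row_offset n m j' + (k' + m j') = int (row_index n m (j, k))"
  moreover obtain j' k' where x: "x = (j', k')" by fastforce
  ultimately have "x \<in> Tmat_rows r n m"
    and "int (row_index n m x) = int (row_index n m (j, k))"
    using row_index_in_block(1)[OF cone, of j' k'] by (auto simp: Tmat_rows_def)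
  then show "x = (j, k)"
    using inj_on_row_index[OF cone] jk by (auto dest: inj_onD)
qed

lemma index_Tmat:
  assumes "p < nat (vsum r n + vsum r m)" "q < nat (vsum r n + vsum r m)"
  shows "Tmat r c n m $$ (p, q) = (case row_label r n m p of (j, k) \<Rightarrow> c (k - (int q - vsum r m)) j)"
  using assms by (simp add: Tmat_def Let_def)

lemma index_Tmat_row_index:
  assumes cone: "\<forall>j\<in>{1..r}. 0 \<le> n j + m j" and jk: "(j, k) \<in> Tmat_rows r n m"
    and i: "- vsum r m \<le> i" "i < vsum r n"
  shows "Tmat r c n m $$ (row_index n m (j, k), nat (i + vsum r m)) = c (k - i) j"
proof -
  have "nat (i + vsum r m) < nat (vsum r n + vsum r m)" "int (nat (i + vsum r m)) = i + vsum r m"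
    using i by simp_all
  then show ?thesis
    using index_Tmat[OF row_index_less[OF cone jk]] row_label_row_index[OF cone jk] by simp
qed

lemma Tmat_carrier_mat: "Tmat r c n m \<in> carrier_mat (nat (vsum r n + vsum r m)) (nat (vsum r n + vsum r m))"
  by (simp add: Tmat_def Let_def)

lemma bij_betw_nat_diff: "bij_betw (\<lambda>i. nat (i - a)) {a..<b} {..<nat (b - a)}" for a b :: int
  by (rule bij_betw_byWitness[where f' = "\<lambda>q. int q + a"]) auto

lemma bij_betw_nat_reflect: "bij_betw (\<lambda>k. nat (b - k)) {a..b} {..<nat (b - a + 1)}" for a b :: int
  by (rule bij_betw_byWitness[where f' = "\<lambda>q. b - int q"]) auto

lemma lp_span_eq_vanishes_outside: "lp_span a b = vanishes_outside {a..b}"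
  by (auto simp: lp_span_def vanishes_outside_def)

lemma Lfun_mono_mult_eq_sum:
  assumes "P \<in> lp_span a b"
  shows "Lfun c j (mono_mult P (- k)) = (\<Sum>l=a..b. c (k - l) j * P l)"
proof -
  have supp: "{i. mono_mult P (- k) i \<noteq> 0} = (\<lambda>l. l - k) ` {l. P l \<noteq> 0}"
    by (force simp: mono_mult_def image_iff)
  have "Lfun c j (mono_mult P (- k)) = (\<Sum>l\<in>{l. P l \<noteq> 0}. c (k - l) j * P l)"
    unfolding Lfun_def supp
    by (subst sum.reindex) (auto simp: inj_on_def mono_mult_def mult.commute)
  also have "\<dots> = (\<Sum>l=a..b. c (k - l) j * P l)"
    using assms by (intro sum.mono_neutral_left) (auto simp: lp_span_def)
  finally show ?thesis .
qed

lemma bij_betw_fun_upd_pinned: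
  assumes "e \<notin> C"
  shows "bij_betw (\<lambda>x. x(e := 0)) {x \<in> vanishes_outside (insert e C). x e = 1} (vanishes_outside C)"
proof (rule bij_betw_byWitness[where f' = "\<lambda>x. x(e := 1)"])
  show "\<forall>x\<in>{x \<in> vanishes_outside (insert e C). x e = 1}. x(e := 0, e := 1) = x"
    by (simp add: fun_upd_idem)
  show "\<forall>x\<in>vanishes_outside C. x(e := 1, e := 0) = x"
    using assms by (auto simp: vanishes_outside_def intro: fun_upd_idem)
qed (auto simp: vanishes_outside_def)

lemma bij_betw_shifted_row_index:
  assumes cone: "\<forall>j\<in>{1..r}. 0 \<le> n j + m j"
  shows "bij_betw (row_index n m \<circ> (\<lambda>(j, k). (j, k - s)))
    {(j, k). j \<in> {1..r} \<and> - m j + s \<le> k \<and> k \<le> n j - 1 + s} {..<nat (vsum r n + vsum r m)}"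
proof (rule bij_betw_trans[OF _ bij_betw_row_index[OF cone]])
  show "bij_betw (\<lambda>(j, k). (j, k - s))
      {(j, k). j \<in> {1..r} \<and> - m j + s \<le> k \<and> k \<le> n j - 1 + s} (Tmat_rows r n m)"
    by (rule bij_betw_byWitness[where f' = "\<lambda>(j, k). (j, k + s)"]) (auto simp: Tmat_rows_def)
qed

lemma det_Tmat_ne_0_iff_ex1_Phi_shifted:
  assumes cone: "\<forall>j\<in>{1..r}. 0 \<le> n j + m j"
    and span: "{- vsum r m..vsum r n} = insert e {- vsum r m + s..<vsum r n + s}"
    and e: "e \<notin> {- vsum r m + s..<vsum r n + s}"
  shows "det (Tmat r c n m) \<noteq> 0 \<longleftrightarrow>
    (\<exists>!\<Phi>. \<Phi> \<in> lp_span (- vsum r m) (vsum r n) \<and> \<Phi> e = 1 \<and>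
       (\<forall>j\<in>{1..r}. \<forall>k. - m j + s \<le> k \<and> k \<le> n j - 1 + s \<longrightarrow> Lfun c j (mono_mult \<Phi> (- k)) = 0))"
proof -
  (* Row (j, k - s) of T is the condition at w^-k, column l + |m| - s the coefficient of z^l. *)
  define C where "C = {- vsum r m + s..<vsum r n + s}"
  define R where "R = {(j, k). j \<in> {1..r} \<and> - m j + s \<le> k \<and> k \<le> n j - 1 + s}"
  define \<gamma> where "\<gamma> = (\<lambda>l. nat (l - (- vsum r m + s)))"
  have rows: "bij_betw (row_index n m \<circ> (\<lambda>(j, k). (j, k - s))) R {..<nat (vsum r n + vsum r m)}"
    unfolding R_def by (rule bij_betw_shifted_row_index[OF cone])
  have cols: "bij_betw \<gamma> C {..<nat (vsum r n + vsum r m)}"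
    using bij_betw_nat_diff[of "- vsum r m + s" "vsum r n + s"] by (simp add: C_def \<gamma>_def)
  have entry: "Tmat r c n m $$ ((row_index n m \<circ> (\<lambda>(j, k). (j, k - s))) x, \<gamma> l) = c (snd x - l) (fst x)"
    if "x \<in> R" "l \<in> C" for x l
    using that index_Tmat_row_index[OF cone, of "fst x" "snd x - s" "l - s" c]
    by (auto simp: R_def C_def \<gamma>_def Tmat_rows_def algebra_simps)
  define S where "S = {\<Phi>. \<Phi> \<in> lp_span (- vsum r m) (vsum r n) \<and> \<Phi> e = 1}"
  have bij_S: "bij_betw (\<lambda>\<Phi>. \<Phi>(e := 0)) S (vanishes_outside C)"
    using bij_betw_fun_upd_pinned[OF e] by (simp add: S_def C_def lp_span_eq_vanishes_outside span)
  have Lfun_S: "Lfun c j (mono_mult \<Phi> (- k)) = c (k - e) j + (\<Sum>l\<in>C. c (k - l) j * (\<Phi>(e := 0)) l)"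
    if "\<Phi> \<in> S" for \<Phi> j k
  proof -
    have "Lfun c j (mono_mult \<Phi> (- k)) = (\<Sum>l\<in>insert e C. c (k - l) j * \<Phi> l)"
      using that unfolding C_def span[symmetric] by (simp add: S_def Lfun_mono_mult_eq_sum)
    also have "\<dots> = c (k - e) j + (\<Sum>l\<in>C. c (k - l) j * (\<Phi>(e := 0)) l)"
      using that e by (simp add: S_def C_def, intro sum.cong) auto
    finally show ?thesis .
  qed
  have "det (Tmat r c n m) \<noteq> 0 \<longleftrightarrow> (\<exists>!x. x \<in> vanishes_outside C \<and>
      (\<forall>x'\<in>R. (\<Sum>l\<in>C. c (snd x' - l) (fst x') * x l) = - c (snd x' - e) (fst x')))"
    using det_ne_0_iff_ex1_indexed_solution[OF Tmat_carrier_mat rows cols,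
        where b = "\<lambda>x'. - c (snd x' - e) (fst x')"] entry
    by simp
  also have "\<dots> \<longleftrightarrow> (\<exists>!\<Phi>. \<Phi> \<in> S \<and>
      (\<forall>j\<in>{1..r}. \<forall>k. - m j + s \<le> k \<and> k \<le> n j - 1 + s \<longrightarrow> Lfun c j (mono_mult \<Phi> (- k)) = 0))"
    by (rule ex1_bij_betw_iff[OF bij_S, symmetric]) (auto simp: Lfun_S add_eq_0_iff R_def)
  finally show ?thesis
    by (simp add: S_def conj_assoc)
qed

definition Xi_space :: "nat \<Rightarrow> (nat \<Rightarrow> int) \<Rightarrow> (nat \<Rightarrow> int) \<Rightarrow> int \<Rightarrow> (nat \<Rightarrow> int \<Rightarrow> complex) set" where
  "Xi_space r n m s = {\<Xi>. (\<forall>j. j \<notin> {1..r} \<longrightarrow> \<Xi> j = (\<lambda>_. 0)) \<and>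
    (\<forall>j\<in>{1..r}. \<Xi> j \<in> lp_span (- n j + 1 - s) (m j - s))}"

lemma Xi_space_vanishes:
  assumes "\<Xi> \<in> Xi_space r n m s" and "(j, k) \<notin> Tmat_rows r n m"
  shows "\<Xi> j (- k - s) = 0"
proof (cases "j \<in> {1..r}")
  case True
  then have "\<not> (- n j + 1 - s \<le> - k - s \<and> - k - s \<le> m j - s)"
    using assms(2) by (auto simp: Tmat_rows_def)
  moreover have "\<Xi> j \<in> lp_span (- n j + 1 - s) (m j - s)"
    using True assms(1) by (simp add: Xi_space_def)
  ultimately show ?thesis by (auto simp: lp_span_def)
next
  case False
  then show ?thesis using assms(1) by (simp add: Xi_space_def)
qed

lemma bij_betw_Xi_space:
  "bij_betw (\<lambda>\<Xi> x. \<Xi> (fst x) (- snd x - s)) (Xi_space r n m s) (vanishes_outside (Tmat_rows r n m))"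
proof (rule bij_betw_byWitness[where f' = "\<lambda>y j l. y (j, - l - s)"])
  show "(\<lambda>\<Xi> x. \<Xi> (fst x) (- snd x - s)) ` Xi_space r n m s \<subseteq> vanishes_outside (Tmat_rows r n m)"
    using Xi_space_vanishes by (fastforce simp: vanishes_outside_def)
  show "(\<lambda>y j l. y (j, - l - s)) ` vanishes_outside (Tmat_rows r n m) \<subseteq> Xi_space r n m s"
  proof (rule image_subsetI)
    fix y :: "nat \<times> int \<Rightarrow> complex" assume "y \<in> vanishes_outside (Tmat_rows r n m)"
    then have "y (j, - l - s) = 0" if "j \<notin> {1..r} \<or> \<not> (- n j + 1 - s \<le> l \<and> l \<le> m j - s)" for j l
      using that by (auto simp: vanishes_outside_def Tmat_rows_def)
    then show "(\<lambda>j l. y (j, - l - s)) \<in> Xi_space r n m s"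
      by (auto simp: Xi_space_def lp_span_def fun_eq_iff)
  qed
qed simp_all

lemma sum_Lfun_Xi_space:
  assumes "\<Xi> \<in> Xi_space r n m s"
  shows "(\<Sum>j=1..r. Lfun c j (mono_mult (\<Xi> j) (- k))) =
    (\<Sum>x\<in>Tmat_rows r n m. c (snd x + k + s) (fst x) * \<Xi> (fst x) (- snd x - s))"
proof -
  have "(\<Sum>j=1..r. Lfun c j (mono_mult (\<Xi> j) (- k))) =
      (\<Sum>j=1..r. \<Sum>l=- n j + 1 - s..m j - s. c (k - l) j * \<Xi> j l)"
    using assms by (intro sum.cong refl Lfun_mono_mult_eq_sum) (simp add: Xi_space_def)
  also have "\<dots> = (\<Sum>j=1..r. \<Sum>k'=- m j..n j - 1. c (k' + k + s) j * \<Xi> j (- k' - s))"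
  proof (rule sum.cong[OF refl])
    fix j
    show "(\<Sum>l=- n j + 1 - s..m j - s. c (k - l) j * \<Xi> j l) =
        (\<Sum>k'=- m j..n j - 1. c (k' + k + s) j * \<Xi> j (- k' - s))"
      by (rule sum.reindex_bij_witness[where i = "\<lambda>k'. - k' - s" and j = "\<lambda>l. - l - s"]) auto
  qed
  also have "\<dots> = (\<Sum>x\<in>Tmat_rows r n m. c (snd x + k + s) (fst x) * \<Xi> (fst x) (- snd x - s))"
    by (simp add: Tmat_rows_def sum.Sigma split_def)
  finally show ?thesis .
qed

lemma det_Tmat_ne_0_iff_ex1_Xi_shifted:
  assumes cone: "\<forall>j\<in>{1..r}. 0 \<le> n j + m j"
    and eqs: "{- vsum r n + 1 - s..vsum r m - s} = insert p {- vsum r n + 1..vsum r m - 1}"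
    and p: "p \<notin> {- vsum r n + 1..vsum r m - 1}"
  shows "det (Tmat r c n m) \<noteq> 0 \<longleftrightarrow>
    (\<exists>!\<Xi>. (\<forall>j. j \<notin> {1..r} \<longrightarrow> \<Xi> j = (\<lambda>_. 0)) \<and>
       (\<forall>j\<in>{1..r}. \<Xi> j \<in> lp_span (- n j + 1 - s) (m j - s)) \<and>
       (\<forall>k. - vsum r n + 1 \<le> k \<and> k \<le> vsum r m - 1 \<longrightarrow>
          (\<Sum>j=1..r. Lfun c j (mono_mult (\<Xi> j) (- k))) = 0) \<and>
       (\<Sum>j=1..r. Lfun c j (mono_mult (\<Xi> j) (- p))) = 1)"
proof -
  (* Row (j, k') of T carries the coefficient of z^(-k'-s) in Xi_j and column |m| - k - s is
     the condition at w^-k, so here the system is transposed. *)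
  define K where "K = {- vsum r n + 1 - s..vsum r m - s}"
  define \<gamma> where "\<gamma> = (\<lambda>k. nat (vsum r m - s - k))"
  have cols: "bij_betw \<gamma> K {..<nat (vsum r n + vsum r m)}"
    using bij_betw_nat_reflect[where a = "- vsum r n + 1 - s" and b = "vsum r m - s"]
    by (simp add: K_def \<gamma>_def add.commute)
  have entry: "Tmat r c n m $$ (row_index n m x, \<gamma> k) = c (snd x + k + s) (fst x)"
    if "x \<in> Tmat_rows r n m" "k \<in> K" for x k
    using that index_Tmat_row_index[OF cone, of "fst x" "snd x" "- k - s" c]
    by (simp add: \<gamma>_def K_def algebra_simps)
  have K_iff: "(\<forall>k\<in>K. E k = (if k = p then 1 else 0)) \<longleftrightarrow>
      (\<forall>k. - vsum r n + 1 \<le> k \<and> k \<le> vsum r m - 1 \<longrightarrow> E k = 0) \<and> E p = (1::complex)" for E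
    using p unfolding K_def eqs by auto
  have "det (Tmat r c n m) \<noteq> 0 \<longleftrightarrow> (\<exists>!y. y \<in> vanishes_outside (Tmat_rows r n m) \<and>
      (\<forall>k\<in>K. (\<Sum>x\<in>Tmat_rows r n m. c (snd x + k + s) (fst x) * y x) = (if k = p then 1 else 0)))"
    using det_ne_0_iff_ex1_indexed_solution_transpose[OF Tmat_carrier_mat
        bij_betw_row_index[OF cone] cols, where b = "\<lambda>k. if k = p then 1 else 0"] entry
    by simp
  also have "\<dots> \<longleftrightarrow> (\<exists>!\<Xi>. \<Xi> \<in> Xi_space r n m s \<and>
      (\<forall>k. - vsum r n + 1 \<le> k \<and> k \<le> vsum r m - 1 \<longrightarrow>
          (\<Sum>j=1..r. Lfun c j (mono_mult (\<Xi> j) (- k))) = 0) \<and>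
      (\<Sum>j=1..r. Lfun c j (mono_mult (\<Xi> j) (- p))) = 1)"
  proof (rule ex1_bij_betw_iff[OF bij_betw_Xi_space, symmetric])
    fix \<Xi> assume "\<Xi> \<in> Xi_space r n m s"
    then show "(\<forall>k. - vsum r n + 1 \<le> k \<and> k \<le> vsum r m - 1 \<longrightarrow>
          (\<Sum>j=1..r. Lfun c j (mono_mult (\<Xi> j) (- k))) = 0) \<and>
        (\<Sum>j=1..r. Lfun c j (mono_mult (\<Xi> j) (- p))) = 1 \<longleftrightarrow>
      (\<forall>k\<in>K. (\<Sum>x\<in>Tmat_rows r n m. c (snd x + k + s) (fst x) * \<Xi> (fst x) (- snd x - s)) =
          (if k = p then 1 else 0))"
      using K_iff[of "\<lambda>k. \<Sum>j=1..r. Lfun c j (mono_mult (\<Xi> j) (- k))"]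
      by (simp add: sum_Lfun_Xi_space[symmetric])
  qed
  finally show ?thesis
    by (simp add: Xi_space_def conj_assoc)
qed

lemma det_Tmat_ne_0_iff_ex1_Phi:
  assumes cone: "\<forall>j\<in>{1..r}. 0 \<le> n j + m j"
  shows "det (Tmat r c n m) \<noteq> 0 \<longleftrightarrow>
    (\<exists>!\<Phi>. \<Phi> \<in> lp_span (- vsum r m) (vsum r n) \<and> \<Phi> (vsum r n) = 1 \<and>
       (\<forall>j\<in>{1..r}. \<forall>k. - m j \<le> k \<and> k \<le> n j - 1 \<longrightarrow> Lfun c j (mono_mult \<Phi> (- k)) = 0))"
proof -
  have "{- vsum r m..vsum r n} = insert (vsum r n) {- vsum r m + 0..<vsum r n + 0}"
    using vsum_add_vsum_nonneg[OF cone] by auto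
  from det_Tmat_ne_0_iff_ex1_Phi_shifted[OF cone this] show ?thesis by simp
qed

lemma det_Tmat_ne_0_iff_ex1_Phi_star:
  assumes cone: "\<forall>j\<in>{1..r}. 0 \<le> n j + m j"
  shows "det (Tmat r c n m) \<noteq> 0 \<longleftrightarrow>
    (\<exists>!\<Phi>. \<Phi> \<in> lp_span (- vsum r m) (vsum r n) \<and> \<Phi> (- vsum r m) = 1 \<and>
       (\<forall>j\<in>{1..r}. \<forall>k. - m j + 1 \<le> k \<and> k \<le> n j \<longrightarrow> Lfun c j (mono_mult \<Phi> (- k)) = 0))"
proof -
  have "{- vsum r m..vsum r n} = insert (- vsum r m) {- vsum r m + 1..<vsum r n + 1}"
    using vsum_add_vsum_nonneg[OF cone] by auto
  from det_Tmat_ne_0_iff_ex1_Phi_shifted[OF cone this] show ?thesis by simp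
qed

lemma det_Tmat_ne_0_iff_ex1_Xi:
  assumes cone: "\<forall>j\<in>{1..r}. 0 \<le> n j + m j" and pos: "0 < vsum r n + vsum r m"
  shows "det (Tmat r c n m) \<noteq> 0 \<longleftrightarrow>
    (\<exists>!\<Xi>. (\<forall>j. j \<notin> {1..r} \<longrightarrow> \<Xi> j = (\<lambda>_. 0)) \<and>
       (\<forall>j\<in>{1..r}. \<Xi> j \<in> lp_span (- n j) (m j - 1)) \<and>
       (\<forall>k. - vsum r n + 1 \<le> k \<and> k \<le> vsum r m - 1 \<longrightarrow>
          (\<Sum>j=1..r. Lfun c j (mono_mult (\<Xi> j) (- k))) = 0) \<and>
       (\<Sum>j=1..r. Lfun c j (mono_mult (\<Xi> j) (vsum r n))) = 1)"
proof -
  have "{- vsum r n + 1 - 1..vsum r m - 1} = insert (- vsum r n) {- vsum r n + 1..vsum r m - 1}"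
    using pos by auto
  from det_Tmat_ne_0_iff_ex1_Xi_shifted[OF cone this] show ?thesis by simp
qed

lemma det_Tmat_ne_0_iff_ex1_Xi_star:
  assumes cone: "\<forall>j\<in>{1..r}. 0 \<le> n j + m j" and pos: "0 < vsum r n + vsum r m"
  shows "det (Tmat r c n m) \<noteq> 0 \<longleftrightarrow>
    (\<exists>!\<Xi>. (\<forall>j. j \<notin> {1..r} \<longrightarrow> \<Xi> j = (\<lambda>_. 0)) \<and>
       (\<forall>j\<in>{1..r}. \<Xi> j \<in> lp_span (- n j + 1) (m j)) \<and>
       (\<forall>k. - vsum r n + 1 \<le> k \<and> k \<le> vsum r m - 1 \<longrightarrow>
          (\<Sum>j=1..r. Lfun c j (mono_mult (\<Xi> j) (- k))) = 0) \<and>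
       (\<Sum>j=1..r. Lfun c j (mono_mult (\<Xi> j) (- vsum r m))) = 1)"
proof -
  have "{- vsum r n + 1 - 0..vsum r m - 0} = insert (vsum r m) {- vsum r n + 1..vsum r m - 1}"
    using pos by auto
  from det_Tmat_ne_0_iff_ex1_Xi_shifted[OF cone this] show ?thesis by simp
qed

theorem proposition2p1:
  fixes r :: nat and c :: "int \<Rightarrow> nat \<Rightarrow> complex" and n m :: "nat \<Rightarrow> int"
  assumes r: "r \<ge> 1"
    and cone: "\<forall>j\<in>{1..r}. n j + m j \<ge> 0"
    and nontriv: "\<not> (\<forall>j\<in>{1..r}. n j = - m j)"
  shows
   "(det (Tmat r c n m) \<noteq> 0 \<longleftrightarrow>
      (\<exists>!\<Phi>. \<Phi> \<in> lp_span (- vsum r m) (vsum r n) \<and> \<Phi> (vsum r n) = 1 \<and>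
         (\<forall>j\<in>{1..r}. \<forall>k. - m j \<le> k \<and> k \<le> n j - 1 \<longrightarrow> Lfun c j (mono_mult \<Phi> (- k)) = 0)))
  \<and> (det (Tmat r c n m) \<noteq> 0 \<longleftrightarrow>
      (\<exists>!\<Phi>. \<Phi> \<in> lp_span (- vsum r m) (vsum r n) \<and> \<Phi> (- vsum r m) = 1 \<and>
         (\<forall>j\<in>{1..r}. \<forall>k. - m j + 1 \<le> k \<and> k \<le> n j \<longrightarrow> Lfun c j (mono_mult \<Phi> (- k)) = 0)))
  \<and> (det (Tmat r c n m) \<noteq> 0 \<longleftrightarrow>
      (\<exists>!\<Xi>. (\<forall>j. j \<notin> {1..r} \<longrightarrow> \<Xi> j = (\<lambda>_. 0)) \<and>
         (\<forall>j\<in>{1..r}. \<Xi> j \<in> lp_span (- n j) (m j - 1)) \<and>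
         (\<forall>k. - vsum r n + 1 \<le> k \<and> k \<le> vsum r m - 1 \<longrightarrow>
              (\<Sum>j=1..r. Lfun c j (mono_mult (\<Xi> j) (- k))) = 0) \<and>
         (\<Sum>j=1..r. Lfun c j (mono_mult (\<Xi> j) (vsum r n))) = 1))
  \<and> (det (Tmat r c n m) \<noteq> 0 \<longleftrightarrow>
      (\<exists>!\<Xi>. (\<forall>j. j \<notin> {1..r} \<longrightarrow> \<Xi> j = (\<lambda>_. 0)) \<and>
         (\<forall>j\<in>{1..r}. \<Xi> j \<in> lp_span (- n j + 1) (m j)) \<and>
         (\<forall>k. - vsum r n + 1 \<le> k \<and> k \<le> vsum r m - 1 \<longrightarrow>
              (\<Sum>j=1..r. Lfun c j (mono_mult (\<Xi> j) (- k))) = 0) \<and>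
         (\<Sum>j=1..r. Lfun c j (mono_mult (\<Xi> j) (- vsum r m))) = 1))"
proof -
  have pos: "0 < vsum r n + vsum r m"
    using vsum_add_vsum_pos[OF cone nontriv] .
  show ?thesis
    using det_Tmat_ne_0_iff_ex1_Phi[OF cone] det_Tmat_ne_0_iff_ex1_Phi_star[OF cone]
      det_Tmat_ne_0_iff_ex1_Xi[OF cone pos] det_Tmat_ne_0_iff_ex1_Xi_star[OF cone pos]
    by (intro conjI)
qed

end
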